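(* Let $n,d,T$ be positive integers and let $\mathbf{s}_1,\dots,\mathbf{s}_T\in\mathbb{R}^n$ be fixed vectors. For an invertible matrix $\mathbf{A}\in\mathbb{R}^{n\times n}$, set $\mathbf{x}_t=\mathbf{A}\mathbf{s}_t$ for $t=1,\dots,T$, and define $$\widehat{\mathbf{M}}_d(\mathbf{A})=\frac{1}{T}\sum_{t=1}^T [\mathbf{x}_t]_d[\mathbf{x}_t]_d^{\top},\qquad \theta_t(\mathbf{A})=[\mathbf{x}_t]_d^{\top}\big(\widehat{\mathbf{M}}_d(\mathbf{A})\big)^{-1}[\mathbf{x}_t]_d,\quad t=1,\dots,T.$$ Assume that $\widehat{\mathbf{M}}_d(\mathbf{I}_n)=\frac{1}{T}\sum_{t=1}^T[\mathbf{s}_t]_d[\mathbf{s}_t]_d^{\top}$ is invertible. Then the scores $(\theta_t(\mathbf{A}))_{t=1}^T$ take values independent of $\mathbf{A}$: for every invertible $\mathbf{A}\in\mathbb{R}^{n\times n}$, $\widehat{\mathbf{M}}_d(\mathbf{A})$ is invertible and $\theta_t(\mathbf{A})=\theta_t(\mathbf{I}_n)=[\mathbf{s}_t]_d^{\top}\big(\widehat{\mathbf{M}}_d(\mathbf{I}_n)\big)^{-1}[\mathbf{s}_t]_d$ for all $t\in\{1,\dots,T\}$.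
   Context: For $\mathbf{x}=(x_1,\dots,x_n)^{\top}\in\mathbb{R}^n$ and $d\in\mathbb{N}$, $[\mathbf{x}]_d$ denotes the column vector of all monomials $x_1^{\alpha_1}\cdots x_n^{\alpha_n}$ of total degree $\alpha_1+\dots+\alpha_n\le d$ (listed in a fixed order), which is a basis of the polynomials in $\mathbf{x}$ of degree at most $d$; its length is $\binom{n+d}{n}$. $\mathbf{I}_n$ is the $n\times n$ identity matrix. *)

theory Defs
  imports "Jordan_Normal_Form.Matrix"
begin

definition monomial_exps :: "nat \<Rightarrow> nat \<Rightarrow> (nat \<Rightarrow> nat) set" where
  "monomial_exps n d = {\<alpha>. (\<forall>i\<ge>n. \<alpha> i = 0) \<and> (\<Sum>i<n. \<alpha> i) \<le> d}"

definition mono_list :: "nat \<Rightarrow> nat \<Rightarrow> (nat \<Rightarrow> nat) list" where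
  "mono_list n d = (SOME L. distinct L \<and> set L = monomial_exps n d)"

definition monvec :: "nat \<Rightarrow> nat \<Rightarrow> real vec \<Rightarrow> real vec" where
  "monvec n d x = vec (length (mono_list n d))
     (\<lambda>k. \<Prod>i<n. (x $ i) ^ ((mono_list n d ! k) i))"

definition Mhat :: "nat \<Rightarrow> nat \<Rightarrow> nat \<Rightarrow> (nat \<Rightarrow> real vec) \<Rightarrow> real mat \<Rightarrow> real mat" where
  "Mhat n d T s A = (let N = length (mono_list n d) in
     mat N N (\<lambda>(i, j). (1 / real T) *
       (\<Sum>t\<in>{1..T}. monvec n d (A *\<^sub>v s t) $ i * monvec n d (A *\<^sub>v s t) $ j)))"

definition mat_inv :: "real mat \<Rightarrow> real mat" where
  "mat_inv M = (SOME B. B \<in> carrier_mat (dim_row M) (dim_row M) \<and> inverts_mat M B \<and> inverts_mat B M)"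

definition theta :: "nat \<Rightarrow> nat \<Rightarrow> nat \<Rightarrow> (nat \<Rightarrow> real vec) \<Rightarrow> real mat \<Rightarrow> nat \<Rightarrow> real" where
  "theta n d T s A t = monvec n d (A *\<^sub>v s t) \<bullet> (mat_inv (Mhat n d T s A) *\<^sub>v monvec n d (A *\<^sub>v s t))"

end

theory Submission
  imports Defs "Jordan_Normal_Form.Determinant"
begin

(* Every monomial of degree at most d in A x is a polynomial of degree at most d in x, so
   [A x]_d = L_A [x]_d for some square matrix L_A, and hence M_d(A) = L_A M_d(I) L_A^T.
   For B = A^-1 the product L_B L_A fixes every [s_t]_d, hence fixes M_d(I) from the left,
   and the invertibility of M_d(I) forces L_B L_A = I (no linear independence of monomial
   functions is needed). So M_d(A) is congruent to M_d(I) via the invertible L_A, its inverse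
   is L_A^-T M_d(I)^-1 L_A^-1, and the quadratic forms theta_t do not change. *)

definition monomial :: "nat \<Rightarrow> (nat \<Rightarrow> nat) \<Rightarrow> 'a :: comm_semiring_1 vec \<Rightarrow> 'a" where
  "monomial n \<alpha> x = (\<Prod>i<n. (x $ i) ^ \<alpha> i)"

definition poly_fun_deg_le :: "nat \<Rightarrow> nat \<Rightarrow> ('a :: comm_semiring_1 vec \<Rightarrow> 'a) \<Rightarrow> bool" where
  "poly_fun_deg_le n d f \<longleftrightarrow>
     (\<exists>c. \<forall>x. f x = (\<Sum>\<alpha>\<in>monomial_exps n d. c \<alpha> * monomial n \<alpha> x))"

lemma finite_monomial_exps: "finite (monomial_exps n d)"
proof (rule finite_subset)
  have "\<alpha> i \<le> d" if "\<alpha> \<in> monomial_exps n d" "i < n" for \<alpha> i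
    using that member_le_sum[of i "{..<n}" \<alpha>] by (auto simp: monomial_exps_def)
  then show "monomial_exps n d \<subseteq>
      {\<alpha>. \<forall>i. (i \<in> {..<n} \<longrightarrow> \<alpha> i \<in> {..d}) \<and> (i \<notin> {..<n} \<longrightarrow> \<alpha> i = 0)}"
    by (auto simp: monomial_exps_def)
qed (intro finite_set_of_finite_funs; simp)

lemma monomial_exps_mono: "a \<le> b \<Longrightarrow> monomial_exps n a \<subseteq> monomial_exps n b"
  by (auto simp: monomial_exps_def)

lemma add_mem_monomial_exps:
  "\<alpha> \<in> monomial_exps n a \<Longrightarrow> \<beta> \<in> monomial_exps n b \<Longrightarrow> (\<lambda>i. \<alpha> i + \<beta> i) \<in> monomial_exps n (a + b)"
  by (auto simp: monomial_exps_def sum.distrib)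

lemma monomial_add: "monomial n (\<lambda>i. \<alpha> i + \<beta> i) x = monomial n \<alpha> x * monomial n \<beta> x"
  by (simp add: monomial_def power_add prod.distrib)

lemma poly_fun_deg_le_zero: "poly_fun_deg_le n d (\<lambda>x. 0)"
  unfolding poly_fun_deg_le_def by (rule exI[of _ "\<lambda>_. 0"]) simp

lemma poly_fun_deg_le_add:
  assumes "poly_fun_deg_le n d f" "poly_fun_deg_le n d g"
  shows "poly_fun_deg_le n d (\<lambda>x. f x + g x)"
proof -
  obtain c e where "\<And>x. f x = (\<Sum>\<alpha>\<in>monomial_exps n d. c \<alpha> * monomial n \<alpha> x)"
    and "\<And>x. g x = (\<Sum>\<alpha>\<in>monomial_exps n d. e \<alpha> * monomial n \<alpha> x)"
    using assms by (auto simp: poly_fun_deg_le_def)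
  then have "\<And>x. f x + g x = (\<Sum>\<alpha>\<in>monomial_exps n d. (c \<alpha> + e \<alpha>) * monomial n \<alpha> x)"
    by (simp add: sum.distrib distrib_right)
  then show ?thesis unfolding poly_fun_deg_le_def by (intro exI[of _ "\<lambda>\<alpha>. c \<alpha> + e \<alpha>"]) simp
qed

lemma poly_fun_deg_le_sum:
  "finite J \<Longrightarrow> (\<And>j. j \<in> J \<Longrightarrow> poly_fun_deg_le n d (f j)) \<Longrightarrow>
    poly_fun_deg_le n d (\<lambda>x. \<Sum>j\<in>J. f j x)"
  by (induction J rule: finite_induct) (auto intro: poly_fun_deg_le_add poly_fun_deg_le_zero)

lemma poly_fun_deg_le_cmult:
  assumes "poly_fun_deg_le n d f"
  shows "poly_fun_deg_le n d (\<lambda>x. a * f x)"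
proof -
  obtain c where "\<And>x. f x = (\<Sum>\<alpha>\<in>monomial_exps n d. c \<alpha> * monomial n \<alpha> x)"
    using assms by (auto simp: poly_fun_deg_le_def)
  then have "\<And>x. a * f x = (\<Sum>\<alpha>\<in>monomial_exps n d. (a * c \<alpha>) * monomial n \<alpha> x)"
    by (simp add: sum_distrib_left mult.assoc)
  then show ?thesis unfolding poly_fun_deg_le_def by (intro exI[of _ "\<lambda>\<alpha>. a * c \<alpha>"]) simp
qed

lemma poly_fun_deg_le_monomial:
  assumes "\<alpha> \<in> monomial_exps n d"
  shows "poly_fun_deg_le n d (monomial n \<alpha>)"
  unfolding poly_fun_deg_le_def
  using assms finite_monomial_exps
  by (intro exI[of _ "\<lambda>\<beta>. of_bool (\<beta> = \<alpha>)"] allI) (simp add: Int_absorb1)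

lemma poly_fun_deg_le_mono:
  assumes "poly_fun_deg_le n a f" "a \<le> b"
  shows "poly_fun_deg_le n b f"
proof -
  obtain c where "f = (\<lambda>x. \<Sum>\<alpha>\<in>monomial_exps n a. c \<alpha> * monomial n \<alpha> x)"
    using assms(1) by (auto simp: poly_fun_deg_le_def)
  then show ?thesis
    using monomial_exps_mono[OF assms(2)]
    by (auto intro!: poly_fun_deg_le_sum poly_fun_deg_le_cmult poly_fun_deg_le_monomial
        simp: finite_monomial_exps)
qed

lemma poly_fun_deg_le_mult:
  assumes "poly_fun_deg_le n a f" "poly_fun_deg_le n b g"
  shows "poly_fun_deg_le n (a + b) (\<lambda>x. f x * g x)"
proof -
  obtain c e where "\<And>x. f x = (\<Sum>\<alpha>\<in>monomial_exps n a. c \<alpha> * monomial n \<alpha> x)"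
    and "\<And>x. g x = (\<Sum>\<beta>\<in>monomial_exps n b. e \<beta> * monomial n \<beta> x)"
    using assms by (auto simp: poly_fun_deg_le_def)
  then have "(\<lambda>x. f x * g x) = (\<lambda>x. \<Sum>\<alpha>\<in>monomial_exps n a. \<Sum>\<beta>\<in>monomial_exps n b.
               (c \<alpha> * e \<beta>) * monomial n (\<lambda>i. \<alpha> i + \<beta> i) x)"
    by (simp add: sum_product monomial_add mult_ac)
  then show ?thesis
    by (auto intro!: poly_fun_deg_le_sum poly_fun_deg_le_cmult poly_fun_deg_le_monomial
        add_mem_monomial_exps simp: finite_monomial_exps)
qed

lemma poly_fun_deg_le_one: "poly_fun_deg_le n 0 (\<lambda>x::'a::comm_semiring_1 vec. 1)"
proof -
  have "(\<lambda>i. 0) \<in> monomial_exps n 0" by (simp add: monomial_exps_def)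
  moreover have "monomial n (\<lambda>i. 0) = (\<lambda>x::'a vec. 1)" by (simp add: monomial_def fun_eq_iff)
  ultimately show ?thesis using poly_fun_deg_le_monomial by metis
qed

lemma poly_fun_deg_le_power:
  fixes k :: nat
  shows "poly_fun_deg_le n a f \<Longrightarrow> poly_fun_deg_le n (a * k) (\<lambda>x. f x ^ k)"
  by (induction k) (auto simp: add.commute dest: poly_fun_deg_le_mult intro: poly_fun_deg_le_one)

lemma poly_fun_deg_le_prod:
  fixes m :: nat
  shows "(\<And>i. i < m \<Longrightarrow> poly_fun_deg_le n (a i) (f i)) \<Longrightarrow>
    poly_fun_deg_le n (\<Sum>i<m. a i) (\<lambda>x. \<Prod>i<m. f i x)"
  by (induction m) (auto intro: poly_fun_deg_le_one poly_fun_deg_le_mult)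

lemma poly_fun_deg_le_coordinate:
  assumes "j < n"
  shows "poly_fun_deg_le n 1 (\<lambda>x::'a::comm_semiring_1 vec. x $ j)"
proof -
  let ?e = "\<lambda>i. if i = j then 1 else 0"
  have "?e \<in> monomial_exps n 1" using assms by (simp add: monomial_exps_def)
  moreover have "monomial n ?e = (\<lambda>x::'a vec. x $ j)"
    using assms by (simp add: monomial_def fun_eq_iff if_distrib prod.delta cong: if_cong)
  ultimately show ?thesis using poly_fun_deg_le_monomial by metis
qed

lemma poly_fun_deg_le_monomial_linear_change:
  assumes "\<alpha> \<in> monomial_exps n d"
  shows "poly_fun_deg_le n d (\<lambda>x. \<Prod>i<n. (\<Sum>j<n. A i j * x $ j) ^ \<alpha> i)"
proof -
  have "poly_fun_deg_le n (\<Sum>i<n. 1 * \<alpha> i) (\<lambda>x. \<Prod>i<n. (\<Sum>j<n. A i j * x $ j) ^ \<alpha> i)"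
    by (intro poly_fun_deg_le_prod poly_fun_deg_le_power poly_fun_deg_le_sum
        poly_fun_deg_le_cmult poly_fun_deg_le_coordinate) auto
  then show ?thesis using assms by (auto simp: monomial_exps_def intro: poly_fun_deg_le_mono)
qed

lemma mono_list: "distinct (mono_list n d)" "set (mono_list n d) = monomial_exps n d"
proof -
  have "\<exists>L. distinct L \<and> set L = monomial_exps n d"
    using finite_distinct_list[OF finite_monomial_exps] by metis
  from someI_ex[OF this] show "distinct (mono_list n d)" "set (mono_list n d) = monomial_exps n d"
    unfolding mono_list_def by auto
qed

lemma sum_monomial_exps_as_mono_list:
  "(\<Sum>\<alpha>\<in>monomial_exps n d. g \<alpha>) = (\<Sum>k<length (mono_list n d). g (mono_list n d ! k))"
  using sum.reindex_bij_betw[OF bij_betw_nth[OF mono_list(1) refl mono_list(2)[symmetric]], of g]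
  by (simp add: atLeast0LessThan)

lemma dim_monvec [simp]: "dim_vec (monvec n d x) = length (mono_list n d)"
  by (simp add: monvec_def)

lemma monvec_carrier [simp]: "monvec n d x \<in> carrier_vec (length (mono_list n d))"
  by (simp add: monvec_def)

lemma monvec_index:
  "k < length (mono_list n d) \<Longrightarrow> monvec n d x $ k = monomial n (mono_list n d ! k) x"
  by (simp add: monvec_def monomial_def)

lemma monvec_linear_change:
  fixes A :: "real mat"
  assumes A: "A \<in> carrier_mat n n"
  obtains L where "L \<in> carrier_mat (length (mono_list n d)) (length (mono_list n d))"
    and "\<And>x. x \<in> carrier_vec n \<Longrightarrow> monvec n d (A *\<^sub>v x) = L *\<^sub>v monvec n d x"
proof -
  let ?ml = "mono_list n d"
  let ?N = "length ?ml"
  have "\<forall>k\<in>{..<?N}. poly_fun_deg_le n d (\<lambda>x. \<Prod>i<n. (\<Sum>j<n. A $$ (i, j) * x $ j) ^ (?ml ! k) i)"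
    using mono_list(2)[of n d] by (auto intro: poly_fun_deg_le_monomial_linear_change)
  then obtain C where C: "\<And>k x. k < ?N \<Longrightarrow> (\<Prod>i<n. (\<Sum>j<n. A $$ (i, j) * x $ j) ^ (?ml ! k) i) =
          (\<Sum>\<alpha>\<in>monomial_exps n d. C k \<alpha> * monomial n \<alpha> x)"
    unfolding poly_fun_deg_le_def by (auto dest!: bchoice)
  define L where "L = mat ?N ?N (\<lambda>(k, j). C k (?ml ! j))"
  have "monvec n d (A *\<^sub>v x) = L *\<^sub>v monvec n d x" if x: "x \<in> carrier_vec n" for x
  proof (rule eq_vecI)
    fix k assume "k < dim_vec (L *\<^sub>v monvec n d x)"
    then have k: "k < ?N" by (simp add: L_def)
    have "monvec n d (A *\<^sub>v x) $ k = (\<Prod>i<n. (\<Sum>j<n. A $$ (i, j) * x $ j) ^ (?ml ! k) i)"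
      using k A x by (auto simp: monvec_def scalar_prod_def atLeast0LessThan intro!: prod.cong)
    also have "\<dots> = (\<Sum>j<?N. C k (?ml ! j) * monomial n (?ml ! j) x)"
      by (simp add: C[OF k] sum_monomial_exps_as_mono_list)
    also have "\<dots> = (\<Sum>j<?N. row L k $ j * monvec n d x $ j)"
      using k by (intro sum.cong refl) (simp add: L_def monvec_index)
    also have "\<dots> = (L *\<^sub>v monvec n d x) $ k"
      using k by (simp add: L_def scalar_prod_def atLeast0LessThan)
    finally show "monvec n d (A *\<^sub>v x) $ k = (L *\<^sub>v monvec n d x) $ k" .
  qed (simp add: monvec_def L_def)
  moreover have "L \<in> carrier_mat ?N ?N" by (simp add: L_def)
  ultimately show ?thesis using that by blast
qed

lemma invertible_matE:
  fixes A :: "'a :: field mat"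
  assumes "A \<in> carrier_mat n n" "invertible_mat A"
  obtains B where "B \<in> carrier_mat n n" "A * B = 1\<^sub>m n" "B * A = 1\<^sub>m n"
proof -
  obtain B where AB: "A * B = 1\<^sub>m n" and BA: "B * A = 1\<^sub>m (dim_row B)"
    using assms unfolding invertible_mat_def inverts_mat_def by auto
  have "B \<in> carrier_mat n n"
    using arg_cong[OF AB, of dim_col] arg_cong[OF BA, of dim_col] assms(1) by auto
  with AB BA show ?thesis using that by auto
qed

lemma invertible_matI:
  fixes A :: "'a :: field mat"
  assumes "A \<in> carrier_mat n n" "B \<in> carrier_mat n n" "A * B = 1\<^sub>m n"
  shows "invertible_mat A"
  using assms mat_mult_left_right_inverse[OF assms]
  unfolding invertible_mat_def inverts_mat_def by auto

lemma mat_inv_eqI: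
  assumes A: "A \<in> carrier_mat n n" and B: "B \<in> carrier_mat n n" and AB: "A * B = 1\<^sub>m n"
  shows "mat_inv A = B"
proof -
  have BA: "B * A = 1\<^sub>m n" by (rule mat_mult_left_right_inverse[OF A B AB])
  have "\<exists>C. C \<in> carrier_mat (dim_row A) (dim_row A) \<and> inverts_mat A C \<and> inverts_mat C A"
    using A B AB BA by (auto simp: inverts_mat_def)
  then have C: "mat_inv A \<in> carrier_mat n n" "mat_inv A * A = 1\<^sub>m n"
    using A unfolding mat_inv_def inverts_mat_def by (metis (mono_tags, lifting) carrier_matD(1) someI_ex)+
  have "B = (mat_inv A * A) * B" using C B by simp
  also have "\<dots> = mat_inv A" unfolding assoc_mult_mat[OF C(1) A B] AB using C by simp
  finally show ?thesis by simp
qed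

lemma congruence_right_inverse:
  fixes L L' M Q :: "'a :: field mat"
  assumes L: "L \<in> carrier_mat n n" and L': "L' \<in> carrier_mat n n"
    and M: "M \<in> carrier_mat n n" and Q: "Q \<in> carrier_mat n n"
    and L'L: "L' * L = 1\<^sub>m n" and MQ: "M * Q = 1\<^sub>m n"
  shows "(L * M * transpose_mat L) * (transpose_mat L' * Q * L') = 1\<^sub>m n"
proof -
  have LL': "L * L' = 1\<^sub>m n" by (rule mat_mult_left_right_inverse[OF L' L L'L])
  have TT: "transpose_mat L * transpose_mat L' = 1\<^sub>m n"
    using transpose_mult[OF L' L] L'L by simp
  have cancel: "transpose_mat L * (transpose_mat L' * X) = X" if "X \<in> carrier_mat n n" for X
    using L L' that by (subst assoc_mult_mat[symmetric, of _ n n _ n _ n]) (auto simp: TT)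
  have "(L * M * transpose_mat L) * (transpose_mat L' * Q * L')
      = L * M * (transpose_mat L * (transpose_mat L' * Q * L'))"
    using L L' M Q by (intro assoc_mult_mat) auto
  also have "transpose_mat L * (transpose_mat L' * Q * L') = Q * L'"
    using cancel[of "Q * L'"] L' Q by simp
  also have "L * M * (Q * L') = L * ((M * Q) * L')"
    by (simp only: assoc_mult_mat[OF L M mult_carrier_mat[OF Q L']] assoc_mult_mat[OF M Q L'])
  also have "\<dots> = 1\<^sub>m n"
    using L L' MQ LL' by simp
  finally show ?thesis .
qed

lemma quadratic_form_congruence:
  fixes L L' Q :: "'a :: comm_ring_1 mat"
  assumes L: "L \<in> carrier_mat n n" and L': "L' \<in> carrier_mat n n"
    and Q: "Q \<in> carrier_mat n n" and v: "v \<in> carrier_vec n" and L'L: "L' * L = 1\<^sub>m n"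
  shows "(L *\<^sub>v v) \<bullet> ((transpose_mat L' * Q * L') *\<^sub>v (L *\<^sub>v v)) = v \<bullet> (Q *\<^sub>v v)"
proof -
  have Lv: "L *\<^sub>v v \<in> carrier_vec n" using L v by simp
  have L'Lv: "L' *\<^sub>v (L *\<^sub>v v) = v"
    using L L' v by (subst assoc_mult_mat_vec[symmetric, of _ n n _ n]) (auto simp: L'L)
  have "(transpose_mat L' * Q * L') *\<^sub>v (L *\<^sub>v v) = transpose_mat L' *\<^sub>v (Q *\<^sub>v (L' *\<^sub>v (L *\<^sub>v v)))"
    using L' Q Lv by (simp add: assoc_mult_mat_vec[of _ n n _ n])
  then have "(transpose_mat L' * Q * L') *\<^sub>v (L *\<^sub>v v) = transpose_mat L' *\<^sub>v (Q *\<^sub>v v)"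
    by (simp only: L'Lv)
  then have "(L *\<^sub>v v) \<bullet> ((transpose_mat L' * Q * L') *\<^sub>v (L *\<^sub>v v))
      = (transpose_mat L' *\<^sub>v (Q *\<^sub>v v)) \<bullet> (L *\<^sub>v v)"
    using L L' Q v by (simp add: comm_scalar_prod[of _ n])
  also have "\<dots> = (Q *\<^sub>v v) \<bullet> v"
    using transpose_vec_mult_scalar[OF L'] L Q v L'Lv by simp
  finally show ?thesis using Q v by (simp add: comm_scalar_prod[of _ n])
qed

definition monvec_mat :: "nat \<Rightarrow> nat \<Rightarrow> nat \<Rightarrow> (nat \<Rightarrow> real vec) \<Rightarrow> real mat" where
  "monvec_mat n d T x = mat (length (mono_list n d)) T (\<lambda>(i, k). monvec n d (x (Suc k)) $ i)"

lemma monvec_mat_carrier: "monvec_mat n d T x \<in> carrier_mat (length (mono_list n d)) T"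
  by (simp add: monvec_mat_def)

lemma col_monvec_mat: "k < T \<Longrightarrow> col (monvec_mat n d T x) k = monvec n d (x (Suc k))"
  by (intro eq_vecI) (auto simp: monvec_mat_def)

lemma Mhat_eq_gram:
  "Mhat n d T s A = (1 / real T) \<cdot>\<^sub>m
     (monvec_mat n d T (\<lambda>t. A *\<^sub>v s t) * transpose_mat (monvec_mat n d T (\<lambda>t. A *\<^sub>v s t)))"
  (is "_ = _ \<cdot>\<^sub>m (?W * transpose_mat ?W)")
proof (rule eq_matI)
  fix i j assume "i < dim_row ((1 / real T) \<cdot>\<^sub>m (?W * transpose_mat ?W))"
    and "j < dim_col ((1 / real T) \<cdot>\<^sub>m (?W * transpose_mat ?W))"
  then have i: "i < length (mono_list n d)" and j: "j < length (mono_list n d)"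
    by (auto simp: monvec_mat_def)
  let ?x = "\<lambda>t. monvec n d (A *\<^sub>v s t)"
  have "(?W * transpose_mat ?W) $$ (i, j) = (\<Sum>k<T. ?x (Suc k) $ i * ?x (Suc k) $ j)"
    using i j by (auto simp: monvec_mat_def scalar_prod_def atLeast0LessThan intro!: sum.cong)
  also have "\<dots> = (\<Sum>t\<in>{1..T}. ?x t $ i * ?x t $ j)"
    using sum.atLeast1_atMost_eq[of "\<lambda>t. ?x t $ i * ?x t $ j" T] by simp
  finally show "Mhat n d T s A $$ (i, j) = ((1 / real T) \<cdot>\<^sub>m (?W * transpose_mat ?W)) $$ (i, j)"
    using i j by (simp add: Mhat_def Let_def monvec_mat_def)
qed (simp_all add: Mhat_def Let_def monvec_mat_def)

lemma monvec_mat_linear_change: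
  assumes L: "L \<in> carrier_mat (length (mono_list n d)) (length (mono_list n d))"
    and y: "\<And>t. t \<in> {1..T} \<Longrightarrow> monvec n d (y t) = L *\<^sub>v monvec n d (x t)"
  shows "monvec_mat n d T y = L * monvec_mat n d T x"
proof (rule eq_matI)
  fix i k assume "i < dim_row (L * monvec_mat n d T x)" "k < dim_col (L * monvec_mat n d T x)"
  then have i: "i < length (mono_list n d)" and k: "k < T"
    using L by (auto simp: monvec_mat_def)
  have "(L * monvec_mat n d T x) $$ (i, k) = (L *\<^sub>v col (monvec_mat n d T x) k) $ i"
    using i k L monvec_mat_carrier[of n d T x] by simp
  also have "\<dots> = (L *\<^sub>v monvec n d (x (Suc k))) $ i"
    using k by (simp add: col_monvec_mat)
  also have "\<dots> = monvec_mat n d T y $$ (i, k)"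
    using i k by (simp add: y[symmetric] monvec_mat_def)
  finally show "monvec_mat n d T y $$ (i, k) = (L * monvec_mat n d T x) $$ (i, k)" ..
qed (use L in \<open>simp_all add: monvec_mat_def\<close>)

lemma smult_gram_mult_left:
  fixes L W :: "'a :: comm_semiring_0 mat"
  assumes L: "L \<in> carrier_mat m m" and W: "W \<in> carrier_mat m k"
  shows "c \<cdot>\<^sub>m ((L * W) * transpose_mat (L * W)) = L * (c \<cdot>\<^sub>m (W * transpose_mat W)) * transpose_mat L"
proof -
  have WT: "transpose_mat W \<in> carrier_mat k m" and LT: "transpose_mat L \<in> carrier_mat m m"
    and X: "W * transpose_mat W \<in> carrier_mat m m"
    using L W by auto
  have "(L * W) * transpose_mat (L * W) = L * (W * transpose_mat W) * transpose_mat L"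
    by (simp only: transpose_mult[OF L W] assoc_mult_mat[OF L W mult_carrier_mat[OF WT LT]]
        assoc_mult_mat[OF W WT LT] assoc_mult_mat[OF L X LT])
  then show ?thesis
    by (simp only: mult_smult_distrib[OF L X] mult_smult_assoc_mat[OF mult_carrier_mat[OF L X] LT])
qed

lemma Mhat_linear_change:
  assumes s: "\<And>t. t \<in> {1..T} \<Longrightarrow> s t \<in> carrier_vec n"
    and L: "L \<in> carrier_mat (length (mono_list n d)) (length (mono_list n d))"
    and hL: "\<And>x. x \<in> carrier_vec n \<Longrightarrow> monvec n d (A *\<^sub>v x) = L *\<^sub>v monvec n d x"
  shows "Mhat n d T s A = L * Mhat n d T s (1\<^sub>m n) * transpose_mat L"
proof -
  have "monvec_mat n d T (\<lambda>t. A *\<^sub>v s t) = L * monvec_mat n d T (\<lambda>t. 1\<^sub>m n *\<^sub>v s t)"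
    using s by (intro monvec_mat_linear_change[OF L]) (simp add: hL)
  then show ?thesis
    unfolding Mhat_eq_gram by (simp only: smult_gram_mult_left[OF L monvec_mat_carrier])
qed

lemma eq_one_if_fixes_monvecs:
  assumes s: "\<And>t. t \<in> {1..T} \<Longrightarrow> s t \<in> carrier_vec n"
    and inv: "invertible_mat (Mhat n d T s (1\<^sub>m n))"
    and P: "P \<in> carrier_mat (length (mono_list n d)) (length (mono_list n d))"
    and P_fixes: "\<And>t. t \<in> {1..T} \<Longrightarrow> P *\<^sub>v monvec n d (s t) = monvec n d (s t)"
  shows "P = 1\<^sub>m (length (mono_list n d))"
proof -
  let ?N = "length (mono_list n d)"
  let ?M = "Mhat n d T s (1\<^sub>m n)"
  let ?W = "monvec_mat n d T (\<lambda>t. 1\<^sub>m n *\<^sub>v s t)"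
  have M: "?M \<in> carrier_mat ?N ?N" by (simp add: Mhat_def Let_def)
  obtain Q where Q: "Q \<in> carrier_mat ?N ?N" "?M * Q = 1\<^sub>m ?N"
    using invertible_matE[OF M inv] by blast
  have W: "?W \<in> carrier_mat ?N T" and WT: "transpose_mat ?W \<in> carrier_mat T ?N"
    using monvec_mat_carrier by auto
  have W_fixed: "P * ?W = ?W"
    using s by (intro monvec_mat_linear_change[OF P, symmetric]) (simp add: P_fixes)
  have "P * ?M = (1 / real T) \<cdot>\<^sub>m ((P * ?W) * transpose_mat ?W)"
    unfolding Mhat_eq_gram
    by (simp only: mult_smult_distrib[OF P mult_carrier_mat[OF W WT]] assoc_mult_mat[OF P W WT])
  also have "\<dots> = ?M"
    unfolding W_fixed Mhat_eq_gram ..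
  finally have PM: "P * ?M = ?M" .
  have "P = P * (?M * Q)" using P Q by simp
  also have "\<dots> = (P * ?M) * Q" by (rule assoc_mult_mat[OF P M Q(1), symmetric])
  finally show ?thesis using Q by (simp add: PM)
qed

lemma monvec_change_left_inverse:
  assumes s: "\<And>t. t \<in> {1..T} \<Longrightarrow> s t \<in> carrier_vec n"
    and inv: "invertible_mat (Mhat n d T s (1\<^sub>m n))"
    and A: "A \<in> carrier_mat n n" and B: "B \<in> carrier_mat n n" and BA: "B * A = 1\<^sub>m n"
    and L: "L \<in> carrier_mat (length (mono_list n d)) (length (mono_list n d))"
    and L': "L' \<in> carrier_mat (length (mono_list n d)) (length (mono_list n d))"
    and hL: "\<And>x. x \<in> carrier_vec n \<Longrightarrow> monvec n d (A *\<^sub>v x) = L *\<^sub>v monvec n d x"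
    and hL': "\<And>x. x \<in> carrier_vec n \<Longrightarrow> monvec n d (B *\<^sub>v x) = L' *\<^sub>v monvec n d x"
  shows "L' * L = 1\<^sub>m (length (mono_list n d))"
proof (rule eq_one_if_fixes_monvecs[OF s inv])
  fix t assume "t \<in> {1..T}"
  with s have st: "s t \<in> carrier_vec n" by blast
  have "(L' * L) *\<^sub>v monvec n d (s t) = L' *\<^sub>v monvec n d (A *\<^sub>v s t)"
    using L L' st by (simp add: hL)
  also have "\<dots> = monvec n d (B *\<^sub>v (A *\<^sub>v s t))"
    using A st by (simp add: hL')
  also have "B *\<^sub>v (A *\<^sub>v s t) = (B * A) *\<^sub>v s t"
    by (rule assoc_mult_mat_vec[symmetric, OF B A st])
  finally show "(L' * L) *\<^sub>v monvec n d (s t) = monvec n d (s t)"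
    using BA st by simp
qed (simp_all add: mult_carrier_mat[OF L' L])

lemma Mhat_theta_linear_change:
  assumes s: "\<And>t. t \<in> {1..T} \<Longrightarrow> s t \<in> carrier_vec n"
    and inv: "invertible_mat (Mhat n d T s (1\<^sub>m n))"
    and L: "L \<in> carrier_mat (length (mono_list n d)) (length (mono_list n d))"
    and L': "L' \<in> carrier_mat (length (mono_list n d)) (length (mono_list n d))"
    and L'L: "L' * L = 1\<^sub>m (length (mono_list n d))"
    and hL: "\<And>x. x \<in> carrier_vec n \<Longrightarrow> monvec n d (A *\<^sub>v x) = L *\<^sub>v monvec n d x"
  shows "invertible_mat (Mhat n d T s A)"
    and "t \<in> {1..T} \<Longrightarrow> theta n d T s A t = theta n d T s (1\<^sub>m n) t"
proof -
  let ?N = "length (mono_list n d)"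
  let ?M = "Mhat n d T s (1\<^sub>m n)"
  have M: "?M \<in> carrier_mat ?N ?N" and MA: "Mhat n d T s A \<in> carrier_mat ?N ?N"
    by (simp_all add: Mhat_def Let_def)
  obtain Q where Q: "Q \<in> carrier_mat ?N ?N" "?M * Q = 1\<^sub>m ?N"
    using invertible_matE[OF M inv] by blast
  have R: "transpose_mat L' * Q * L' \<in> carrier_mat ?N ?N" using L' Q by simp
  have "Mhat n d T s A = L * ?M * transpose_mat L"
    by (rule Mhat_linear_change[OF s L hL])
  then have "Mhat n d T s A * (transpose_mat L' * Q * L') = 1\<^sub>m ?N"
    by (simp only:) (rule congruence_right_inverse[OF L L' M Q(1) L'L Q(2)])
  note right_inverse = MA R this
  show "invertible_mat (Mhat n d T s A)"
    by (rule invertible_matI[OF right_inverse])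
  assume t: "t \<in> {1..T}"
  have "theta n d T s A t = (L *\<^sub>v monvec n d (s t)) \<bullet>
      ((transpose_mat L' * Q * L') *\<^sub>v (L *\<^sub>v monvec n d (s t)))"
    unfolding theta_def mat_inv_eqI[OF right_inverse] hL[OF s[OF t]] ..
  also have "\<dots> = monvec n d (s t) \<bullet> (Q *\<^sub>v monvec n d (s t))"
    by (rule quadratic_form_congruence[OF L L' Q(1) monvec_carrier L'L])
  also have "\<dots> = theta n d T s (1\<^sub>m n) t"
    using s[OF t] by (simp add: theta_def mat_inv_eqI[OF M Q])
  finally show "theta n d T s A t = theta n d T s (1\<^sub>m n) t" .
qed

theorem proposition1:
  fixes n d T :: nat and s :: "nat \<Rightarrow> real vec"
  assumes "n > 0" and "d > 0" and "T > 0"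
    and "\<And>t. t \<in> {1..T} \<Longrightarrow> s t \<in> carrier_vec n"
    and "invertible_mat (Mhat n d T s (1\<^sub>m n))"
  shows "\<forall>A \<in> carrier_mat n n. invertible_mat A \<longrightarrow>
           invertible_mat (Mhat n d T s A) \<and>
           (\<forall>t \<in> {1..T}. theta n d T s A t = theta n d T s (1\<^sub>m n) t \<and>
              theta n d T s (1\<^sub>m n) t =
                monvec n d (s t) \<bullet> (mat_inv (Mhat n d T s (1\<^sub>m n)) *\<^sub>v monvec n d (s t)))"
proof (intro ballI impI)
  note s = assms(4) and inv = assms(5)
  fix A :: "real mat" assume A: "A \<in> carrier_mat n n" and "invertible_mat A"
  then obtain B where B: "B \<in> carrier_mat n n" "B * A = 1\<^sub>m n"
    by (rule invertible_matE)
  obtain L where L: "L \<in> carrier_mat (length (mono_list n d)) (length (mono_list n d))"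
    and hL: "\<And>x. x \<in> carrier_vec n \<Longrightarrow> monvec n d (A *\<^sub>v x) = L *\<^sub>v monvec n d x"
    using monvec_linear_change[OF A] by blast
  obtain L' where L': "L' \<in> carrier_mat (length (mono_list n d)) (length (mono_list n d))"
    and hL': "\<And>x. x \<in> carrier_vec n \<Longrightarrow> monvec n d (B *\<^sub>v x) = L' *\<^sub>v monvec n d x"
    using monvec_linear_change[OF B(1)] by blast
  have "L' * L = 1\<^sub>m (length (mono_list n d))"
    by (rule monvec_change_left_inverse[OF s inv A B(1) B(2) L L' hL hL'])
  from Mhat_theta_linear_change[OF s inv L L' this hL]
  show "invertible_mat (Mhat n d T s A) \<and>
           (\<forall>t \<in> {1..T}. theta n d T s A t = theta n d T s (1\<^sub>m n) t \<and>
              theta n d T s (1\<^sub>m n) t =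
                monvec n d (s t) \<bullet> (mat_inv (Mhat n d T s (1\<^sub>m n)) *\<^sub>v monvec n d (s t)))"
    using s by (simp add: theta_def)
qed

end
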